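(* For almost all $n$-variable Boolean functions $f$ it holds that for every $k$, $k\text{-}NN(f)>\frac{2^{n/2}}{n}$; that is, the fraction of Boolean functions $f:\{0,1\}^n\to\{0,1\}$ such that $k\text{-}NN(f)>2^{n/2}/n$ for all $k$ tends to $1$ as $n\to\infty$.
   Context: Let $f:\{0,1\}^n\to\{0,1\}$ and $k$ a positive integer. A $k$-nearest neighbor representation of $f$ is a pair of disjoint finite sets $(P,N)$ of points of $\mathbb R^n$ such that for every $a\in\{0,1\}^n$, the $k$ smallest Euclidean distances from $a$ to points of $P\cup N$ are all strictly smaller than the remaining $|P\cup N|-k$ distances, and $f(a)=1$ iff at least $k/2$ of the $k$ points of $P\cup N$ closest to $a$ belong to $P$. The size is $|P\cup N|$, and $k\text{-}NN(f)$ is the minimum size of a $k$-nearest neighbor representation of $f$. *)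

theory Defs
  imports Complex_Main "HOL-Library.FuncSet"
begin

text \<open>Points of R^n are real lists of length n; the Boolean cube {0,1}^n is the set of
  bool lists of length n, embedded in R^n via False = 0, True = 1.\<close>

definition cube :: "nat \<Rightarrow> bool list set" where
  "cube n = {a. length a = n}"

definition embed :: "bool list \<Rightarrow> real list" where
  "embed a = map of_bool a"

definition edist :: "nat \<Rightarrow> real list \<Rightarrow> real list \<Rightarrow> real" where
  "edist n x y = sqrt (\<Sum>i<n. (x ! i - y ! i)\<^sup>2)"

definition knn_rep :: "nat \<Rightarrow> nat \<Rightarrow> (bool list \<Rightarrow> bool) \<Rightarrow> real list set \<Rightarrow> real list set \<Rightarrow> bool" where
  "knn_rep n k f P N \<longleftrightarrow>
     finite P \<and> finite N \<and> P \<inter> N = {} \<and>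
     (\<forall>p \<in> P \<union> N. length p = n) \<and>
     (\<forall>a \<in> cube n. \<exists>K. K \<subseteq> P \<union> N \<and> card K = k \<and>
        (\<forall>p \<in> K. \<forall>q \<in> (P \<union> N) - K. edist n (embed a) p < edist n (embed a) q) \<and>
        (f a \<longleftrightarrow> real (card (K \<inter> P)) \<ge> real k / 2))"

definition knn :: "nat \<Rightarrow> nat \<Rightarrow> (bool list \<Rightarrow> bool) \<Rightarrow> nat" where
  "knn n k f = (LEAST s. \<exists>P N. knn_rep n k f P N \<and> card (P \<union> N) = s)"

end

(*
  For a in the cube, the test "a is closer to p than to q" is a linear threshold function of a,
  and by Chow's theorem a threshold function on the cube is determined by its n + 1 Chow
  parameters, each at most 2^n.  The k points nearest to a form the unique k-set that wins all
  comparisons against the remaining points.  Hence a function with a k-NN representation of size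
  at most M is determined by the size, k, the indices of the positive points and the Chow
  parameters of the comparisons of the pairs of points: at most 2^(3M + (n+1)^2 M^2 / 2) data,
  which for M = 2^(n/2) / n is at most 2^(2^n) / n once n >= 12.
*)

theory Submission
  imports Defs
begin

lemma cube_eq_lists: "cube n = {xs. set xs \<subseteq> UNIV \<and> length xs = n}"
  by (simp add: cube_def)

lemma finite_cube [simp]: "finite (cube n)"
  unfolding cube_eq_lists by (rule finite_lists_length_eq) simp

lemma card_cube: "card (cube n) = 2 ^ n"
  using card_lists_length_eq[of "UNIV :: bool set" n] unfolding cube_eq_lists by simp

lemma card_cube_funs: "card (cube n \<rightarrow>\<^sub>E (UNIV :: bool set)) = 2 ^ 2 ^ n"
  by (simp add: card_PiE card_cube)

lemma threshold_imp_of_moments_eq: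
  fixes A :: "'a set" and \<phi> :: "nat \<Rightarrow> 'a \<Rightarrow> real"
  assumes "finite A"
    and g: "\<forall>b\<in>A. g b = ((\<Sum>i<n. w i * \<phi> i b) < t)"
    and moments: "\<forall>i<n. (\<Sum>b\<in>A. of_bool (g b) * \<phi> i b) = (\<Sum>b\<in>A. of_bool (h b) * \<phi> i b)"
    and count: "(\<Sum>b\<in>A. of_bool (g b) :: real) = (\<Sum>b\<in>A. of_bool (h b))"
    and "a \<in> A" "g a"
  shows "h a"
proof (rule ccontr)
  assume "\<not> h a"
  define d where "d b = (of_bool (g b) - of_bool (h b) :: real)" for b
  define F where "F b = d b * ((\<Sum>i<n. w i * \<phi> i b) - t)" for b
  have "(\<Sum>b\<in>A. F b) = (\<Sum>b\<in>A. \<Sum>i<n. w i * (d b * \<phi> i b)) - t * (\<Sum>b\<in>A. d b)"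
    unfolding F_def
    by (simp add: right_diff_distrib sum_subtractf sum_distrib_left sum_distrib_right algebra_simps)
  also have "\<dots> = (\<Sum>i<n. w i * (\<Sum>b\<in>A. d b * \<phi> i b)) - t * (\<Sum>b\<in>A. d b)"
    by (subst sum.swap) (simp add: sum_distrib_left)
  also have "\<dots> = 0"
    using moments count by (simp add: d_def left_diff_distrib sum_subtractf)
  finally have "(\<Sum>b\<in>A. F b) = 0" .
  moreover have "(\<Sum>b\<in>A. F b) < (\<Sum>b\<in>A. 0)"
  proof (rule sum_strict_mono_ex1[OF \<open>finite A\<close>])
    show "\<forall>b\<in>A. F b \<le> 0"
      using g unfolding F_def d_def by (auto simp: not_less)
    show "\<exists>b\<in>A. F b < 0"
      using g \<open>a \<in> A\<close> \<open>g a\<close> \<open>\<not> h a\<close> unfolding F_def d_def by auto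
  qed
  ultimately show False
    by simp
qed

lemma threshold_eq_if_moments_eq:
  fixes A :: "'a set" and \<phi> :: "nat \<Rightarrow> 'a \<Rightarrow> real"
  assumes "finite A"
    and "\<forall>b\<in>A. g b = ((\<Sum>i<n. w i * \<phi> i b) < t)"
    and "\<forall>b\<in>A. h b = ((\<Sum>i<n. v i * \<phi> i b) < u)"
    and "\<forall>i<n. (\<Sum>b\<in>A. of_bool (g b) * \<phi> i b) = (\<Sum>b\<in>A. of_bool (h b) * \<phi> i b)"
    and "(\<Sum>b\<in>A. of_bool (g b) :: real) = (\<Sum>b\<in>A. of_bool (h b))"
    and "a \<in> A"
  shows "g a = h a"
proof
  assume "g a"
  then show "h a"
    by (rule threshold_imp_of_moments_eq[OF assms(1,2,4,5,6)])
next
  assume "h a"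
  show "g a"
    by (rule threshold_imp_of_moments_eq[OF assms(1,3) _ _ assms(6) \<open>h a\<close>])
      (use assms(4,5) in \<open>simp_all only: eq_commute\<close>)
qed

definition threshold_fun :: "nat \<Rightarrow> (bool list \<Rightarrow> bool) \<Rightarrow> bool" where
  "threshold_fun n g \<longleftrightarrow>
     (\<exists>w t. \<forall>a\<in>cube n. g a = ((\<Sum>i<n. w i * of_bool (a ! i)) < (t :: real)))"

definition chow_params :: "nat \<Rightarrow> (bool list \<Rightarrow> bool) \<Rightarrow> nat \<Rightarrow> nat" where
  "chow_params n g =
     (\<lambda>i\<in>{..n}. if i < n then card {a \<in> cube n. g a \<and> a ! i} else card {a \<in> cube n. g a})"

definition threshold_of_chow :: "nat \<Rightarrow> (nat \<Rightarrow> nat) \<Rightarrow> bool list \<Rightarrow> bool" where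
  "threshold_of_chow n c = (SOME g. threshold_fun n g \<and> chow_params n g = c)"

lemma threshold_fun_eq_if_chow_params_eq:
  assumes "threshold_fun n g" "threshold_fun n h" "chow_params n g = chow_params n h"
    and "a \<in> cube n"
  shows "g a = h a"
proof -
  obtain w t where g: "\<forall>b\<in>cube n. g b = ((\<Sum>i<n. w i * of_bool (b ! i)) < (t :: real))"
    using assms(1) unfolding threshold_fun_def by blast
  obtain v u where h: "\<forall>b\<in>cube n. h b = ((\<Sum>i<n. v i * of_bool (b ! i)) < (u :: real))"
    using assms(2) unfolding threshold_fun_def by blast
  have "card {b \<in> cube n. g b \<and> b ! i} = card {b \<in> cube n. h b \<and> b ! i}" if "i < n" for i
    using fun_cong[OF assms(3), of i] that by (simp add: chow_params_def)
  then have moments: "\<forall>i<n. (\<Sum>b\<in>cube n. of_bool (g b) * of_bool (b ! i))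
      = (\<Sum>b\<in>cube n. of_bool (h b) * (of_bool (b ! i) :: real))"
    by (simp add: of_bool_conj[symmetric] Int_def conj_commute)
  have "card {b \<in> cube n. g b} = card {b \<in> cube n. h b}"
    using fun_cong[OF assms(3), of n] by (simp add: chow_params_def)
  then have count: "(\<Sum>b\<in>cube n. of_bool (g b) :: real) = (\<Sum>b\<in>cube n. of_bool (h b))"
    by (simp add: Int_def)
  show ?thesis
    by (rule threshold_eq_if_moments_eq[OF finite_cube g h moments count assms(4)])
qed

lemma threshold_of_chow_params:
  assumes "threshold_fun n g" "a \<in> cube n"
  shows "threshold_of_chow n (chow_params n g) a = g a"
proof -
  have "threshold_fun n (threshold_of_chow n (chow_params n g))
      \<and> chow_params n (threshold_of_chow n (chow_params n g)) = chow_params n g"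
    unfolding threshold_of_chow_def by (rule someI[of _ g]) (simp add: assms(1))
  then show ?thesis
    using threshold_fun_eq_if_chow_params_eq assms by blast
qed

lemma chow_params_in_range: "chow_params n g \<in> {..n} \<rightarrow>\<^sub>E {..2 ^ n}"
proof -
  have "card {a \<in> cube n. P a} \<le> 2 ^ n" for P
    using card_mono[OF finite_cube, of "{a \<in> cube n. P a}" n] by (simp add: card_cube)
  then show ?thesis
    by (auto simp: chow_params_def)
qed

lemma embed_nth: "i < length a \<Longrightarrow> embed a ! i = of_bool (a ! i)"
  by (simp add: embed_def)

lemma threshold_fun_closer:
  "threshold_fun n (\<lambda>a. edist n (embed a) p < edist n (embed a) q)"
proof -
  have "(edist n (embed a) p < edist n (embed a) q)
      = ((\<Sum>i<n. 2 * (q ! i - p ! i) * of_bool (a ! i)) < (\<Sum>i<n. (q ! i)\<^sup>2 - (p ! i)\<^sup>2))"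
    if "a \<in> cube n" for a
  proof -
    have "(edist n (embed a) p < edist n (embed a) q)
        = ((\<Sum>i<n. (of_bool (a ! i) - p ! i)\<^sup>2) < (\<Sum>i<n. (of_bool (a ! i) - q ! i)\<^sup>2))"
      using that by (simp add: edist_def embed_nth cube_def)
    moreover have "(\<Sum>i<n. (of_bool (a ! i) - q ! i)\<^sup>2) - (\<Sum>i<n. (of_bool (a ! i) - p ! i)\<^sup>2)
        = (\<Sum>i<n. (q ! i)\<^sup>2 - (p ! i)\<^sup>2) - (\<Sum>i<n. 2 * (q ! i - p ! i) * of_bool (a ! i))"
      by (simp add: sum_subtractf[symmetric] power2_eq_square algebra_simps)
    ultimately show ?thesis
      by linarith
  qed
  then show ?thesis
    unfolding threshold_fun_def
    by (intro exI[of _ "\<lambda>i. 2 * (q ! i - p ! i)"] exI[of _ "\<Sum>i<n. (q ! i)\<^sup>2 - (p ! i)\<^sup>2"]) simp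
qed

(* Shifts of less than 1/3 keep the copies of a strictly nearer to a than any copy of another
   cube point. *)
definition cluster_point :: "nat \<Rightarrow> bool list \<Rightarrow> nat \<Rightarrow> real list" where
  "cluster_point k a j = (of_bool (hd a) + real j / (3 * real k)) # embed (tl a)"

lemma edist_Cons:
  "edist (Suc m) (x # xs) (y # ys) = sqrt ((x - y)\<^sup>2 + (\<Sum>i<m. (xs ! i - ys ! i)\<^sup>2))"
  by (simp add: edist_def sum.lessThan_Suc_shift del: sum.lessThan_Suc)

lemma embed_Cons: "embed (x # c) = of_bool x # embed c"
  by (simp add: embed_def)

lemma sum_sq_embed_ge_1:
  assumes "c \<in> cube m" "e \<in> cube m" "c \<noteq> e"
  shows "1 \<le> (\<Sum>i<m. (embed c ! i - embed e ! i)\<^sup>2)"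
proof -
  have len: "length c = m" "length e = m"
    using assms by (auto simp: cube_def)
  obtain i where i: "i < m" "c ! i \<noteq> e ! i"
    using assms(3) len by (auto simp: list_eq_iff_nth_eq)
  have "1 = (embed c ! i - embed e ! i)\<^sup>2"
    using i len by (cases "c ! i"; cases "e ! i") (auto simp: embed_nth)
  also have "\<dots> \<le> (\<Sum>i<m. (embed c ! i - embed e ! i)\<^sup>2)"
    by (rule member_le_sum) (use i in auto)
  finally show ?thesis .
qed

lemma cluster_point_closer:
  assumes a: "a \<in> cube (Suc m)" and b: "b \<in> cube (Suc m)" and "b \<noteq> a"
    and j: "j < k" and j': "j' < k"
  shows "edist (Suc m) (embed a) (cluster_point k a j) < edist (Suc m) (embed a) (cluster_point k b j')"
proof -
  obtain x c where a_eq: "a = x # c" and c: "c \<in> cube m"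
    using a by (cases a) (auto simp: cube_def)
  obtain y e where b_eq: "b = y # e" and e: "e \<in> cube m"
    using b by (cases b) (auto simp: cube_def)
  define d where "d = real j / (3 * real k)"
  define d' where "d' = real j' / (3 * real k)"
  define D where "D = (of_bool x - (of_bool y + d'))\<^sup>2 + (\<Sum>i<m. (embed c ! i - embed e ! i)\<^sup>2)"
  have d: "0 \<le> d" "d < 1/3" and d': "0 \<le> d'" "d' < 1/3"
    using j j' by (auto simp: d_def d'_def field_simps)
  have "d\<^sup>2 < (1/3)\<^sup>2"
    using d by (intro power_strict_mono) auto
  moreover have "(1/3)\<^sup>2 \<le> D"
  proof (cases "c = e")
    case True
    then have "x \<noteq> y"
      using \<open>b \<noteq> a\<close> a_eq b_eq by auto
    then have "1/3 \<le> \<bar>of_bool x - (of_bool y + d')\<bar>"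
      using d' by (cases x; cases y) auto
    then have "(1/3)\<^sup>2 \<le> (of_bool x - (of_bool y + d'))\<^sup>2"
      by (metis abs_of_nonneg abs_le_square_iff zero_le_divide_1_iff zero_le_numeral)
    then show ?thesis
      unfolding D_def by (simp add: sum_nonneg add_increasing2)
  next
    case False
    then have "1 \<le> (\<Sum>i<m. (embed c ! i - embed e ! i)\<^sup>2)"
      using sum_sq_embed_ge_1 c e by blast
    then show ?thesis
      unfolding D_def by (simp add: add_increasing power_divide)
  qed
  ultimately have "sqrt (d\<^sup>2) < sqrt D"
    by (intro real_sqrt_less_mono) linarith
  then show ?thesis
    unfolding a_eq b_eq cluster_point_def embed_Cons edist_Cons d_def d'_def D_def by simp
qed

lemma cluster_point_inj:
  assumes a: "a \<in> cube (Suc m)" and b: "b \<in> cube (Suc m)" and j: "j < k" and j': "j' < k"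
    and eq: "cluster_point k a j = cluster_point k b j'"
  shows "a = b \<and> j = j'"
proof -
  obtain x c where a_eq: "a = x # c"
    using a by (cases a) (auto simp: cube_def)
  obtain y e where b_eq: "b = y # e"
    using b by (cases b) (auto simp: cube_def)
  have "c = e"
    using eq unfolding a_eq b_eq cluster_point_def by (simp add: embed_def inj_map_eq_map inj_def)
  define d where "d = real j / (3 * real k)"
  define d' where "d' = real j' / (3 * real k)"
  have hd_eq: "of_bool x + d = of_bool y + d'"
    using eq unfolding a_eq b_eq cluster_point_def d_def d'_def by simp
  have "0 \<le> d" "d < 1/3" "0 \<le> d'" "d' < 1/3"
    using j j' by (auto simp: d_def d'_def field_simps)
  then have "x = y"
    using hd_eq by (cases x; cases y) auto
  then have "j = j'"
    using hd_eq j by (simp add: d_def d'_def field_simps)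
  with \<open>x = y\<close> \<open>c = e\<close> show ?thesis
    using a_eq b_eq by simp
qed

definition cluster :: "nat \<Rightarrow> bool list \<Rightarrow> real list set" where
  "cluster k a = cluster_point k a ` {..<k}"

lemma card_cluster: "a \<in> cube (Suc m) \<Longrightarrow> card (cluster k a) = k"
  unfolding cluster_def using cluster_point_inj[of a m a _ k]
  by (subst card_image) (auto intro: inj_onI)

lemma cluster_disjoint:
  "a \<in> cube (Suc m) \<Longrightarrow> b \<in> cube (Suc m) \<Longrightarrow> a \<noteq> b \<Longrightarrow> cluster k a \<inter> cluster k b = {}"
  using cluster_point_inj[of a m b _ k] by (auto simp: cluster_def)

lemma knn_rep_exists:
  assumes "0 < n" "0 < k"
  shows "\<exists>P N. knn_rep n k f P N"
proof -
  obtain m where m: "n = Suc m"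
    using assms(1) by (cases n) auto
  define P where "P = (\<Union>a \<in> {a \<in> cube n. f a}. cluster k a)"
  define N where "N = (\<Union>a \<in> {a \<in> cube n. \<not> f a}. cluster k a)"
  have PN: "P \<union> N = (\<Union>a \<in> cube n. cluster k a)"
    unfolding P_def N_def by blast
  have "P \<inter> N = {}"
    unfolding P_def N_def using cluster_disjoint[of _ m] m by fast
  moreover have "\<forall>p \<in> P \<union> N. length p = n"
    unfolding PN cluster_def by (auto simp: cluster_point_def embed_def cube_def m)
  moreover have "\<exists>K. K \<subseteq> P \<union> N \<and> card K = k \<and>
        (\<forall>p \<in> K. \<forall>q \<in> (P \<union> N) - K. edist n (embed a) p < edist n (embed a) q) \<and>
        (f a \<longleftrightarrow> real (card (K \<inter> P)) \<ge> real k / 2)" if a: "a \<in> cube n" for a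
  proof (intro exI conjI)
    show "cluster k a \<subseteq> P \<union> N"
      unfolding PN using a by blast
    show "card (cluster k a) = k"
      using card_cluster a m by simp
    show "\<forall>p \<in> cluster k a. \<forall>q \<in> (P \<union> N) - cluster k a. edist n (embed a) p < edist n (embed a) q"
      unfolding PN using cluster_point_closer[of a m] a m by (fastforce simp: cluster_def)
    have "cluster k a \<inter> cluster k b = {}" if "b \<in> cube n" "f b \<noteq> f a" for b
      using cluster_disjoint[of a m b] a that m by auto
    then have "cluster k a \<inter> P = (if f a then cluster k a else {})"
      unfolding P_def using a by auto
    then show "f a \<longleftrightarrow> real (card (cluster k a \<inter> P)) \<ge> real k / 2"
      using \<open>card (cluster k a) = k\<close> \<open>0 < k\<close> by simp
  qed
  moreover have "finite P" "finite N"
    unfolding P_def N_def cluster_def by auto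
  ultimately have "knn_rep n k f P N"
    unfolding knn_rep_def by blast
  then show ?thesis
    by blast
qed

(* Without a representation, knn would be the junk value 0 of LEAST over an empty set. *)
lemma knn_attained:
  assumes "0 < n" "0 < k"
  shows "\<exists>P N. knn_rep n k f P N \<and> card (P \<union> N) = knn n k f"
  using knn_rep_exists[OF assms, of f] unfolding knn_def by (rule LeastI_ex[OF exE]) blast

lemma ex_separating_subset_iff:
  fixes d :: "'a \<Rightarrow> 'b :: linorder"
  assumes "finite S" "K0 \<subseteq> S"
    and K0_closer: "\<forall>i\<in>K0. \<forall>j\<in>S - K0. d i < d j"
    and "\<And>i j. i \<in> S \<Longrightarrow> j \<in> S \<Longrightarrow> d i < d j \<Longrightarrow> R i j"
    and R_le: "\<And>i j. i \<in> S \<Longrightarrow> j \<in> S \<Longrightarrow> R i j \<Longrightarrow> d i \<le> d j"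
  shows "(\<exists>K \<subseteq> S. card K = card K0 \<and> (\<forall>i\<in>K. \<forall>j\<in>S - K. R i j) \<and> Q K) \<longleftrightarrow> Q K0"
proof
  assume "\<exists>K \<subseteq> S. card K = card K0 \<and> (\<forall>i\<in>K. \<forall>j\<in>S - K. R i j) \<and> Q K"
  then obtain K where K: "K \<subseteq> S" "card K = card K0" "\<forall>i\<in>K. \<forall>j\<in>S - K. R i j" "Q K"
    by blast
  have "K = K0"
  proof (rule ccontr)
    assume "K \<noteq> K0"
    have "finite K" "finite K0"
      using K(1) assms(1,2) finite_subset by auto
    then obtain i j where "i \<in> K - K0" "j \<in> K0 - K"
      using \<open>K \<noteq> K0\<close> K(2) card_subset_eq by (metis Diff_eq_empty_iff equals0I)
    then have "d j < d i" "d i \<le> d j"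
      using K0_closer K(1,3) R_le assms(2) by blast+
    then show False
      by simp
  qed
  then show "Q K0"
    using K(4) by simp
next
  assume "Q K0"
  then show "\<exists>K \<subseteq> S. card K = card K0 \<and> (\<forall>i\<in>K. \<forall>j\<in>S - K. R i j) \<and> Q K"
    using assms(2,4) K0_closer by blast
qed

lemma card_bij_betw_preimage:
  assumes "bij_betw e S T" "K \<subseteq> T"
  shows "card {i \<in> S. e i \<in> K} = card K"
proof -
  have "e ` {i \<in> S. e i \<in> K} = K"
    using assms by (auto simp: bij_betw_def)
  moreover have "inj_on e {i \<in> S. e i \<in> K}"
    using assms(1) by (auto simp: bij_betw_def intro: inj_on_subset)
  ultimately show ?thesis
    using card_image by fastforce
qed

definition index_pairs :: "nat \<Rightarrow> (nat \<times> nat) set" where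
  "index_pairs s = {(i, j). i < j \<and> j < s}"

type_synonym knn_code = "nat \<times> nat \<times> nat set \<times> (nat \<times> nat \<Rightarrow> nat \<Rightarrow> nat)"

(* A code (s, k, L, C): s points indexed by {..<s}, the parameter k, the indices L of the positive
   points and the Chow parameters C (i, j) of the comparisons of points i < j. *)
definition knn_codes :: "nat \<Rightarrow> nat \<Rightarrow> knn_code set" where
  "knn_codes n M = {..M} \<times> {..M} \<times> Pow {..<M} \<times> (index_pairs M \<rightarrow>\<^sub>E ({..n} \<rightarrow>\<^sub>E {..2 ^ n}))"

(* For i > j the stored strict comparison of j with i is negated, hence read as a weak one;
   storing only the pairs i < j halves the number of parameters, which the count needs. *)
definition code_closer :: "nat \<Rightarrow> (nat \<times> nat \<Rightarrow> nat \<Rightarrow> nat) \<Rightarrow> bool list \<Rightarrow> nat \<Rightarrow> nat \<Rightarrow> bool" where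
  "code_closer n C a i j =
     (if i < j then threshold_of_chow n (C (i, j)) a else \<not> threshold_of_chow n (C (j, i)) a)"

definition knn_decode :: "nat \<Rightarrow> knn_code \<Rightarrow> bool list \<Rightarrow> bool" where
  "knn_decode n = (\<lambda>(s, k, L, C). restrict (\<lambda>a. \<exists>K \<subseteq> {..<s}. card K = k \<and>
     (\<forall>i\<in>K. \<forall>j\<in>{..<s} - K. code_closer n C a i j) \<and> real k / 2 \<le> real (card (K \<inter> L))) (cube n))"

definition pair_chow_params :: "nat \<Rightarrow> nat \<Rightarrow> (nat \<Rightarrow> real list) \<Rightarrow> nat \<times> nat \<Rightarrow> nat \<Rightarrow> nat" where
  "pair_chow_params n M e = (\<lambda>(i, j) \<in> index_pairs M.
     chow_params n (\<lambda>a. edist n (embed a) (e i) < edist n (embed a) (e j)))"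

lemma pair_chow_params_in_range: "pair_chow_params n M e \<in> index_pairs M \<rightarrow>\<^sub>E ({..n} \<rightarrow>\<^sub>E {..2 ^ n})"
  using chow_params_in_range by (auto simp: pair_chow_params_def)

lemma code_closer_pair_chow_params:
  assumes "a \<in> cube n" "i < M" "j < M" "i \<noteq> j"
  shows "code_closer n (pair_chow_params n M e) a i j \<longleftrightarrow>
    (if i < j then edist n (embed a) (e i) < edist n (embed a) (e j)
     else edist n (embed a) (e i) \<le> edist n (embed a) (e j))"
  using assms threshold_of_chow_params[OF threshold_fun_closer assms(1)]
  by (auto simp: code_closer_def pair_chow_params_def index_pairs_def not_less)

lemma knn_decode_iff:
  assumes e: "bij_betw e {..<s} S" and "s \<le> M" and a: "a \<in> cube n" and "K0 \<subseteq> S"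
    and K0_closer: "\<forall>p\<in>K0. \<forall>q\<in>S - K0. edist n (embed a) p < edist n (embed a) q"
  shows "knn_decode n (s, card K0, {i \<in> {..<s}. e i \<in> P}, pair_chow_params n M e) a \<longleftrightarrow>
    real (card K0) / 2 \<le> real (card (K0 \<inter> P))"
proof -
  let ?L = "{i \<in> {..<s}. e i \<in> P}"
  define d where "d i = edist n (embed a) (e i)" for i
  define I0 where "I0 = {i \<in> {..<s}. e i \<in> K0}"
  have "card I0 = card K0"
    unfolding I0_def by (rule card_bij_betw_preimage[OF e \<open>K0 \<subseteq> S\<close>])
  have "I0 \<inter> ?L = {i \<in> {..<s}. e i \<in> K0 \<inter> P}"
    by (auto simp: I0_def)
  moreover have "card {i \<in> {..<s}. e i \<in> K0 \<inter> P} = card (K0 \<inter> P)"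
    by (rule card_bij_betw_preimage[OF e]) (use \<open>K0 \<subseteq> S\<close> in blast)
  ultimately have card_I0_L: "card (I0 \<inter> ?L) = card (K0 \<inter> P)"
    by (simp only:)
  have I0_closer: "\<forall>i\<in>I0. \<forall>j\<in>{..<s} - I0. d i < d j"
    using K0_closer e by (auto simp: I0_def d_def bij_betw_def)
  have closer_iff:
    "code_closer n (pair_chow_params n M e) a i j \<longleftrightarrow> (if i < j then d i < d j else d i \<le> d j)"
    if "i < s" "j < s" "i \<noteq> j" for i j
    using code_closer_pair_chow_params[OF a] that \<open>s \<le> M\<close> unfolding d_def by simp
  have "knn_decode n (s, card K0, ?L, pair_chow_params n M e) a \<longleftrightarrow>
      (\<exists>K \<subseteq> {..<s}. card K = card I0 \<and>
        (\<forall>i\<in>K. \<forall>j\<in>{..<s} - K. code_closer n (pair_chow_params n M e) a i j) \<and>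
        real (card K0) / 2 \<le> real (card (K \<inter> ?L)))"
    using a \<open>card I0 = card K0\<close> by (simp add: knn_decode_def)
  also have "\<dots> \<longleftrightarrow> real (card K0) / 2 \<le> real (card (I0 \<inter> ?L))"
  proof (rule ex_separating_subset_iff[where d = d])
    show "code_closer n (pair_chow_params n M e) a i j"
      if "i \<in> {..<s}" "j \<in> {..<s}" "d i < d j" for i j
      using that closer_iff[of i j] by (cases "i = j") auto
    show "d i \<le> d j" if "i \<in> {..<s}" "j \<in> {..<s}" "code_closer n (pair_chow_params n M e) a i j" for i j
      using that closer_iff[of i j] by (cases "i = j") (auto split: if_splits)
  qed (auto simp: I0_def I0_closer)
  finally show ?thesis
    using card_I0_L by simp
qed

lemma knn_rep_in_decode_image:
  assumes rep: "knn_rep n k f P N" and f: "f \<in> cube n \<rightarrow>\<^sub>E UNIV" and "card (P \<union> N) \<le> M"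
  shows "f \<in> knn_decode n ` knn_codes n M"
proof -
  define s where "s = card (P \<union> N)"
  have fin: "finite (P \<union> N)"
    using rep by (simp add: knn_rep_def)
  obtain e where e: "bij_betw e {..<s} (P \<union> N)"
    using ex_bij_betw_nat_finite[OF fin] by (auto simp: s_def atLeast0LessThan)
  define code where "code = (s, k, {i \<in> {..<s}. e i \<in> P}, pair_chow_params n M e)"
  have nearest: "\<exists>K. K \<subseteq> P \<union> N \<and> card K = k \<and>
      (\<forall>p \<in> K. \<forall>q \<in> (P \<union> N) - K. edist n (embed a) p < edist n (embed a) q) \<and>
      (f a \<longleftrightarrow> real (card (K \<inter> P)) \<ge> real k / 2)" if "a \<in> cube n" for a
    using rep that unfolding knn_rep_def by blast
  have "replicate n False \<in> cube n"
    by (simp add: cube_def)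
  then obtain K where "K \<subseteq> P \<union> N" "card K = k"
    using nearest by blast
  then have "k \<le> s"
    using card_mono[OF fin] unfolding s_def by blast
  then have code: "code \<in> knn_codes n M"
    using \<open>card (P \<union> N) \<le> M\<close> pair_chow_params_in_range by (auto simp: knn_codes_def code_def s_def)
  show ?thesis
  proof (rule rev_image_eqI[OF code], rule ext)
    fix a
    show "f a = knn_decode n code a"
    proof (cases "a \<in> cube n")
      case True
      then obtain K0 where "K0 \<subseteq> P \<union> N" "card K0 = k"
        "\<forall>p \<in> K0. \<forall>q \<in> (P \<union> N) - K0. edist n (embed a) p < edist n (embed a) q"
        "f a \<longleftrightarrow> real (card (K0 \<inter> P)) \<ge> real k / 2"
        using nearest by blast
      then show ?thesis
        using knn_decode_iff[OF e _ True, of M K0 P] \<open>card (P \<union> N) \<le> M\<close> by (simp add: code_def s_def)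
    next
      case False
      then show ?thesis
        using PiE_arb[OF f False] by (simp add: knn_decode_def code_def)
    qed
  qed
qed

lemma finite_index_pairs: "finite (index_pairs s)"
  by (rule finite_subset[of _ "{..<s} \<times> {..<s}"]) (auto simp: index_pairs_def)

lemma card_index_pairs_le: "2 * card (index_pairs s) \<le> s\<^sup>2"
proof -
  have "index_pairs s \<inter> prod.swap ` index_pairs s = {}"
    by (auto simp: index_pairs_def)
  then have "card (index_pairs s \<union> prod.swap ` index_pairs s) = 2 * card (index_pairs s)"
    by (simp add: card_Un_disjoint finite_index_pairs card_image)
  moreover have "index_pairs s \<union> prod.swap ` index_pairs s \<subseteq> {..<s} \<times> {..<s}"
    by (auto simp: index_pairs_def)
  then have "card (index_pairs s \<union> prod.swap ` index_pairs s) \<le> s\<^sup>2"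
    using card_mono[of "{..<s} \<times> {..<s}"] by (simp add: power2_eq_square)
  ultimately show ?thesis
    by simp
qed

lemma finite_knn_codes: "finite (knn_codes n M)"
  unfolding knn_codes_def by (intro finite_cartesian_product finite_PiE finite_index_pairs) auto

lemma card_knn_codes:
  "card (knn_codes n M) = (M + 1) * (M + 1) * 2 ^ M * ((2 ^ n + 1) ^ (n + 1)) ^ card (index_pairs M)"
  unfolding knn_codes_def card_cartesian_product card_Pow[OF finite_lessThan] card_PiE[OF finite_index_pairs]
    card_PiE[OF finite_atMost] prod_constant card_atMost card_lessThan
  by (simp only: Suc_eq_plus1 mult.assoc)

lemma card_knn_codes_sq_le: "(card (knn_codes n M))\<^sup>2 \<le> 2 ^ (6 * M + (n + 1)\<^sup>2 * M\<^sup>2)"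
proof -
  let ?p = "card (index_pairs M)"
  have "M + 1 \<le> 2 ^ M"
    using less_exp[of M] by (simp add: Suc_le_eq)
  then have "(M + 1) * (M + 1) * 2 ^ M \<le> 2 ^ M * 2 ^ M * 2 ^ M"
    by (intro mult_le_mono) auto
  then have "card (knn_codes n M) \<le> (2 ^ M) ^ 3 * ((2 ^ n + 1) ^ (n + 1)) ^ ?p"
    unfolding card_knn_codes power3_eq_cube by (rule mult_le_mono1)
  also have "\<dots> \<le> (2 ^ M) ^ 3 * (2 ^ ((n + 1) * (n + 1))) ^ ?p"
    unfolding power_mult by (intro mult_le_mono order.refl power_mono) simp_all
  finally have "(card (knn_codes n M))\<^sup>2 \<le> ((2 ^ M) ^ 3 * (2 ^ ((n + 1) * (n + 1))) ^ ?p)\<^sup>2"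
    by (rule power_mono) simp
  also have "\<dots> = 2 ^ (6 * M + (n + 1) * (n + 1) * (2 * ?p))"
    by (simp add: power_mult_distrib algebra_simps flip: power_mult power_add)
  also have "\<dots> \<le> 2 ^ (6 * M + (n + 1)\<^sup>2 * M\<^sup>2)"
    using mult_le_mono2[OF card_index_pairs_le[of M], of "(n + 1) * (n + 1)"]
    unfolding power2_eq_square by (intro power_increasing) linarith+
  finally show ?thesis .
qed

lemma square_le_two_power: "4 \<le> n \<Longrightarrow> n\<^sup>2 \<le> (2 :: nat) ^ n"
proof (induction n rule: nat_induct_at_least)
  case (Suc n)
  have "4 * n \<le> n * n"
    using Suc.hyps by (rule mult_le_mono1)
  have "(Suc n)\<^sup>2 = n\<^sup>2 + (2 * n + 1)"
    by (simp add: power2_eq_square)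
  also have "\<dots> \<le> n\<^sup>2 + n\<^sup>2"
    using \<open>4 * n \<le> n * n\<close> \<open>4 \<le> n\<close> unfolding power2_eq_square by linarith
  also have "\<dots> \<le> 2 ^ Suc n"
    using Suc.IH by simp
  finally show ?case .
qed simp

lemma card_knn_codes_le:
  assumes "12 \<le> n" "n\<^sup>2 * M\<^sup>2 \<le> 2 ^ n"
  shows "n * card (knn_codes n M) \<le> 2 ^ 2 ^ n"
proof (rule power2_le_imp_le)
  have "2 * n \<le> 2 ^ n"
    using mult_le_mono1[of 2 n n] assms(1) square_le_two_power[of n] unfolding power2_eq_square
    by linarith
  have "4 * (2 * n + 7) \<le> 12 * n"
    using assms(1) by simp
  also have "\<dots> \<le> n\<^sup>2"
    using mult_le_mono1[OF assms(1), of n] by (simp add: power2_eq_square)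
  finally have quadratic: "4 * ((2 * n + 7) * M\<^sup>2) \<le> 2 ^ n"
    using assms(2) mult_le_mono1[of "4 * (2 * n + 7)" "n\<^sup>2" "M\<^sup>2"] by linarith
  have "M \<le> M\<^sup>2"
    by (cases M) (auto simp: power2_eq_square)
  then have "6 * M + (n + 1)\<^sup>2 * M\<^sup>2 + n \<le> n\<^sup>2 * M\<^sup>2 + (2 * n + 7) * M\<^sup>2 + n"
    by (simp add: power2_eq_square algebra_simps)
  then have exponent: "6 * M + (n + 1)\<^sup>2 * M\<^sup>2 + n \<le> 2 * 2 ^ n"
    using assms(2) quadratic \<open>2 * n \<le> 2 ^ n\<close> by linarith
  have "(n * card (knn_codes n M))\<^sup>2 \<le> 2 ^ n * 2 ^ (6 * M + (n + 1)\<^sup>2 * M\<^sup>2)"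
    unfolding power_mult_distrib
    using square_le_two_power[of n] card_knn_codes_sq_le assms(1) by (intro mult_le_mono) auto
  also have "\<dots> \<le> 2 ^ (2 * 2 ^ n)"
    using exponent by (simp flip: power_add)
  also have "\<dots> = (2 ^ 2 ^ n)\<^sup>2"
    by (simp flip: power_mult add: mult.commute)
  finally show "(n * card (knn_codes n M))\<^sup>2 \<le> (2 ^ 2 ^ n)\<^sup>2" .
qed simp

definition knn_small :: "nat \<Rightarrow> (bool list \<Rightarrow> bool) set" where
  "knn_small n = {f \<in> cube n \<rightarrow>\<^sub>E UNIV. \<exists>k>0. real (knn n k f) \<le> 2 powr (real n / 2) / real n}"

lemma square_mult_floor_le:
  assumes "0 < n"
  shows "n\<^sup>2 * (nat \<lfloor>2 powr (real n / 2) / real n\<rfloor>)\<^sup>2 \<le> 2 ^ n"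
proof -
  define M where "M = nat \<lfloor>2 powr (real n / 2) / real n\<rfloor>"
  have "real M \<le> 2 powr (real n / 2) / real n"
    unfolding M_def by (rule of_nat_floor) simp
  then have "real n * real M \<le> 2 powr (real n / 2)"
    using assms by (simp add: field_simps)
  then have "(real n * real M)\<^sup>2 \<le> (2 powr (real n / 2))\<^sup>2"
    by (rule power_mono) simp
  also have "(2 powr (real n / 2))\<^sup>2 = 2 ^ n"
    by (simp add: power2_eq_square powr_realpow flip: powr_add)
  finally have "real (n\<^sup>2 * M\<^sup>2) \<le> real (2 ^ n)"
    by (simp add: power_mult_distrib)
  then show ?thesis
    unfolding M_def of_nat_le_iff .
qed

lemma knn_small_subset_decode_image:
  assumes "0 < n"
  shows "knn_small n \<subseteq> knn_decode n ` knn_codes n (nat \<lfloor>2 powr (real n / 2) / real n\<rfloor>)"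
proof
  fix f
  assume "f \<in> knn_small n"
  then obtain k where f: "f \<in> cube n \<rightarrow>\<^sub>E UNIV" and "0 < k"
    and small: "real (knn n k f) \<le> 2 powr (real n / 2) / real n"
    unfolding knn_small_def by blast
  obtain P N where "knn_rep n k f P N" "card (P \<union> N) = knn n k f"
    using knn_attained[OF assms \<open>0 < k\<close>] by blast
  moreover have "knn n k f \<le> nat \<lfloor>2 powr (real n / 2) / real n\<rfloor>"
    using small by (simp add: le_nat_floor)
  ultimately show "f \<in> knn_decode n ` knn_codes n (nat \<lfloor>2 powr (real n / 2) / real n\<rfloor>)"
    using knn_rep_in_decode_image f by simp
qed

lemma card_knn_small_le:
  assumes "12 \<le> n"
  shows "n * card (knn_small n) \<le> 2 ^ 2 ^ n"
proof -
  let ?M = "nat \<lfloor>2 powr (real n / 2) / real n\<rfloor>"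
  have "card (knn_small n) \<le> card (knn_decode n ` knn_codes n ?M)"
    using assms knn_small_subset_decode_image by (intro card_mono finite_imageI finite_knn_codes) auto
  also have "\<dots> \<le> card (knn_codes n ?M)"
    by (rule card_image_le[OF finite_knn_codes])
  finally have "n * card (knn_small n) \<le> n * card (knn_codes n ?M)"
    by simp
  also have "\<dots> \<le> 2 ^ 2 ^ n"
    using assms square_mult_floor_le[of n] by (intro card_knn_codes_le) auto
  finally show ?thesis .
qed

lemma knn_small_fraction_le:
  assumes "12 \<le> n"
  shows "real (card (knn_small n)) / 2 ^ 2 ^ n \<le> 1 / real n"
proof -
  have "real n * real (card (knn_small n)) \<le> 2 ^ 2 ^ n"
    using card_knn_small_le[OF assms] by (metis of_nat_le_iff of_nat_mult of_nat_numeral of_nat_power)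
  then show ?thesis
    using assms by (simp add: field_simps)
qed

lemma card_knn_large:
  "real (card {f \<in> cube n \<rightarrow>\<^sub>E (UNIV :: bool set). \<forall>k>0. real (knn n k f) > 2 powr (real n / 2) / real n})
    = 2 ^ 2 ^ n - real (card (knn_small n))"
proof -
  have fin: "finite (cube n \<rightarrow>\<^sub>E (UNIV :: bool set))" and small: "knn_small n \<subseteq> cube n \<rightarrow>\<^sub>E UNIV"
    by (auto simp: knn_small_def intro: finite_PiE)
  have "{f \<in> cube n \<rightarrow>\<^sub>E UNIV. \<forall>k>0. real (knn n k f) > 2 powr (real n / 2) / real n}
      = (cube n \<rightarrow>\<^sub>E UNIV) - knn_small n"
    unfolding knn_small_def by (auto simp: not_le) (meson not_le)
  then show ?thesis
    using card_Diff_subset[OF finite_subset[OF small fin] small] card_mono[OF fin small]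
    by (simp add: card_cube_funs of_nat_diff)
qed

theorem theorem6:
  shows "(\<lambda>n. real (card {f \<in> cube n \<rightarrow>\<^sub>E (UNIV :: bool set).
              \<forall>k>0. real (knn n k f) > 2 powr (real n / 2) / real n})
            / real (card (cube n \<rightarrow>\<^sub>E (UNIV :: bool set))))
         \<longlonglongrightarrow> 1"
proof -
  have "(\<lambda>n. real (card (knn_small n)) / 2 ^ 2 ^ n) \<longlonglongrightarrow> 0"
  proof (rule tendsto_sandwich[of "\<lambda>_. 0" _ _ "\<lambda>n. 1 / real n"])
    show "\<forall>\<^sub>F n in sequentially. real (card (knn_small n)) / 2 ^ 2 ^ n \<le> 1 / real n"
      using eventually_ge_at_top[of 12] by eventually_elim (rule knn_small_fraction_le)
  qed (auto simp: lim_1_over_n)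
  then have "(\<lambda>n. 1 - real (card (knn_small n)) / 2 ^ 2 ^ n) \<longlonglongrightarrow> 1 - 0"
    by (intro tendsto_diff tendsto_const)
  then show ?thesis
    by (simp add: card_knn_large card_cube_funs diff_divide_distrib)
qed

end
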